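(* Let $\Omega=\{re^{i\theta}:0\le r<R(\theta)\}$ be a starlike planar domain with positive, $2\pi$-periodic, Lipschitz continuous radius function $R$, let $q$ be a positive weight in $L^\infty(\partial\Omega)$, written $q(\theta)=q(R(\theta)e^{i\theta})$, and let $f:\mathbb{D}\to\Omega$ be the stretch map $f(re^{i\theta})=R(\theta)re^{i\theta}$. Then the quantities $g_0,g_1$ associated with $f$ and $q$ (defined below) are $$g_0(\Omega)=1+\frac1{2\pi}\int_0^{2\pi}(\log R)'(\theta)^2\,d\theta,\qquad g_1(\Omega,q)=\frac{\frac1{2\pi}\int_0^{2\pi}\big(R(\theta)^2+R'(\theta)^2\big)q(\theta)^2\,d\theta}{\left(\frac1{2\pi}\int_0^{2\pi}\sqrt{R(\theta)^2+R'(\theta)^2}\,q(\theta)\,d\theta\right)^2},$$ and $g_0\ge1$, $g_1\ge1$. Further, $g_0=1$ if and only if $R$ is constant, i.e. $\Omega$ is a disk centered at the origin.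
   Context: For a quasiconformal $f:\mathbb{D}\to\Omega$ with complex dilatation $\mu=\overline{\partial} f/\partial f$ depending only on $\theta$ (where $\partial=\frac12(\partial_x-i\partial_y)$, $\overline\partial=\frac12(\partial_x+i\partial_y)$), set $a_0=\frac{|e^{2i\theta}-\mu(e^{i\theta})|^2}{1-|\mu(e^{i\theta})|^2}$, $a_1=\frac{|e^{2i\theta}+\mu(e^{i\theta})|^2}{1-|\mu(e^{i\theta})|^2}$, $p(\theta)=q(f(e^{i\theta}))|\partial_\theta f(e^{i\theta})|$, and $g_0=\frac1{2\pi}\int_0^{2\pi}a_0\,d\theta$, $g_1=\frac{\frac1{2\pi}\int_0^{2\pi}a_1p^2\,d\theta}{(\frac1{2\pi}\int_0^{2\pi}p\,d\theta)^2}$. *)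

theory Defs
  imports "HOL-Analysis.Analysis"
begin

text \<open>Stretch map f(r e^{i theta}) = R(theta) r e^{i theta}, written on complex numbers
  (defined by the same formula on all of C, so that it may be evaluated on the unit circle).\<close>
definition stretch_map :: "(real \<Rightarrow> real) \<Rightarrow> complex \<Rightarrow> complex" where
  "stretch_map R z = complex_of_real (R (Arg z)) * z"

definition wirt_d :: "(complex \<Rightarrow> complex) \<Rightarrow> complex \<Rightarrow> complex" where
  "wirt_d f z = (frechet_derivative f (at z) 1 - \<i> * frechet_derivative f (at z) \<i>) / 2"

definition wirt_dbar :: "(complex \<Rightarrow> complex) \<Rightarrow> complex \<Rightarrow> complex" where
  "wirt_dbar f z = (frechet_derivative f (at z) 1 + \<i> * frechet_derivative f (at z) \<i>) / 2"

definition dilatation :: "(complex \<Rightarrow> complex) \<Rightarrow> complex \<Rightarrow> complex" where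
  "dilatation f z = wirt_dbar f z / wirt_d f z"

definition a0 :: "(complex \<Rightarrow> complex) \<Rightarrow> real \<Rightarrow> real" where
  "a0 f \<theta> = (cmod (cis (2 * \<theta>) - dilatation f (cis \<theta>)))\<^sup>2 / (1 - (cmod (dilatation f (cis \<theta>)))\<^sup>2)"

definition a1 :: "(complex \<Rightarrow> complex) \<Rightarrow> real \<Rightarrow> real" where
  "a1 f \<theta> = (cmod (cis (2 * \<theta>) + dilatation f (cis \<theta>)))\<^sup>2 / (1 - (cmod (dilatation f (cis \<theta>)))\<^sup>2)"

definition pw :: "(complex \<Rightarrow> real) \<Rightarrow> (complex \<Rightarrow> complex) \<Rightarrow> real \<Rightarrow> real" where
  "pw q f \<theta> = q (f (cis \<theta>)) * cmod (vector_derivative (\<lambda>t. f (cis t)) (at \<theta>))"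

definition g0 :: "(complex \<Rightarrow> complex) \<Rightarrow> real" where
  "g0 f = integral {0..2*pi} (a0 f) / (2*pi)"

definition g1 :: "(complex \<Rightarrow> real) \<Rightarrow> (complex \<Rightarrow> complex) \<Rightarrow> real" where
  "g1 q f = (integral {0..2*pi} (\<lambda>\<theta>. a1 f \<theta> * (pw q f \<theta>)\<^sup>2) / (2*pi))
            / (integral {0..2*pi} (pw q f) / (2*pi))\<^sup>2"

end

theory Submission
  imports Defs
begin

(*
  Where R is differentiable at theta (and theta is not pi, where Arg jumps), the stretch map
  f z = R (Arg z) * z has Wirtinger derivatives d f = R - i R'/2 and dbar f = (i/2) R' e^(2 i theta)
  at e^(i theta).  Hence a0 = 1 + (R'/R)^2, a1 = 1 and |d_theta f| = sqrt (R^2 + R'^2) there.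
  A Lipschitz R is differentiable almost everywhere and is the integral of its derivative:
  R + L x and L x - R are monotone and their interval measures add up to 2 L times Lebesgue
  measure, so the first one has a density (Radon-Nikodym), which Lebesgue's differentiation
  theorem identifies with its derivative.  The pointwise identities therefore hold almost
  everywhere and give the formulas for g0 and g1.  Then g0 >= 1 is clear, g1 >= 1 is the
  Cauchy-Schwarz inequality (int p)^2 <= 2 pi int p^2, and g0 = 1 forces R' = 0 almost
  everywhere, so that R is constant.
*)

section \<open>Lipschitz functions are integrals of their derivatives\<close>

lemma indefinite_integral_right_derivative:
  fixes k F :: "real \<Rightarrow> real"
  assumes int: "\<And>a b. a \<le> b \<Longrightarrow> (k has_integral (F b - F a)) {a..b}"
  obtains N where "negligible N"
    "\<And>x. x \<notin> N \<Longrightarrow> ((\<lambda>h. (F (x + h) - F x) / h) \<longlongrightarrow> k x) (at_right 0)"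
proof -
  have "k integrable_on cbox a b" for a b :: real
    using int[of a b] by (cases "a \<le> b") (auto simp: integrable_on_def)
  then obtain N where N: "negligible N"
    and lim: "\<And>x e. \<lbrakk>x \<notin> N; 0 < e\<rbrakk> \<Longrightarrow> \<exists>d>0. \<forall>h. 0 < h \<and> h < d \<longrightarrow>
               norm (integral (cbox x (x + h *\<^sub>R One)) k /\<^sub>R h ^ DIM(real) - k x) < e"
    using integrable_ccontinuous_explicit[of k] by blast
  show thesis
  proof (rule that[OF N])
    fix x assume x: "x \<notin> N"
    show "((\<lambda>h. (F (x + h) - F x) / h) \<longlongrightarrow> k x) (at_right 0)"
      unfolding tendsto_iff
    proof (intro allI impI)
      fix e :: real assume "0 < e"
      then obtain d where "d > 0" and d: "\<And>h. 0 < h \<Longrightarrow> h < d \<Longrightarrow> \<bar>integral {x..x+h} k / h - k x\<bar> < e"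
        using lim[OF x \<open>0 < e\<close>] by (auto simp: divide_inverse_commute)
      moreover have "F (x + h) - F x = integral {x..x+h} k" if "0 < h" for h
        using int[of x "x + h"] that by (simp add: integral_unique)
      ultimately show "\<forall>\<^sub>F h in at_right 0. dist ((F (x + h) - F x) / h) (k x) < e"
        unfolding eventually_at_right_field by (auto simp: dist_real_def intro!: exI[of _ d])
    qed
  qed
qed

lemma ae_derivative_of_indefinite_integral:
  fixes k F :: "real \<Rightarrow> real"
  assumes int: "\<And>a b. a \<le> b \<Longrightarrow> (k has_integral (F b - F a)) {a..b}"
  obtains N where "negligible N" "\<And>x. x \<notin> N \<Longrightarrow> (F has_real_derivative k x) (at x)"
proof -
  obtain N1 where N1: "negligible N1"
    and right: "\<And>x. x \<notin> N1 \<Longrightarrow> ((\<lambda>h. (F (x + h) - F x) / h) \<longlongrightarrow> k x) (at_right 0)"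
    using indefinite_integral_right_derivative[OF int] by blast
  have "((\<lambda>t. k (- t)) has_integral (- F (- b) - - F (- a))) {a..b}" if "a \<le> b" for a b
    using int[of "- b" "- a"] that has_integral_reflect_real[of k "F (- a) - F (- b)" "- a" "- b"]
    by simp
  then obtain N2 where N2: "negligible N2"
    and right_reflected: "\<And>x. x \<notin> N2 \<Longrightarrow>
      ((\<lambda>h. (- F (- (x + h)) - - F (- x)) / h) \<longlongrightarrow> k (- x)) (at_right 0)"
    using indefinite_integral_right_derivative[of "\<lambda>t. k (- t)" "\<lambda>t. - F (- t)"] by blast
  have "negligible (uminus ` N2)"
    by (rule negligible_differentiable_image_negligible[OF _ N2]) (auto intro: differentiable_on_minus)
  show thesis
  proof (rule that)
    show "negligible (N1 \<union> uminus ` N2)"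
      using N1 \<open>negligible (uminus ` N2)\<close> by (rule negligible_Un)
    fix x assume "x \<notin> N1 \<union> uminus ` N2"
    then have "x \<notin> N1" "- x \<notin> N2"
      by (auto simp: image_iff)
    have "(\<lambda>h. (- F (- (- x + h)) - - F (- (- x))) / h) = (\<lambda>h. (F (x + - h) - F x) / - h)"
      by (simp add: fun_eq_iff divide_simps)
    then have left: "((\<lambda>h. (F (x + h) - F x) / h) \<longlongrightarrow> k x) (at_left 0)"
      unfolding filterlim_at_left_to_right using right_reflected[OF \<open>- x \<notin> N2\<close>] by simp
    show "(F has_real_derivative k x) (at x)"
      unfolding DERIV_def by (rule filterlim_split_at[OF left right[OF \<open>x \<notin> N1\<close>]])
  qed
qed

lemma lipschitz_has_real_derivative_abs_le:
  fixes g :: "real \<Rightarrow> real"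
  assumes lip: "L-lipschitz_on UNIV g" and deriv: "(g has_real_derivative D) (at x)"
  shows "\<bar>D\<bar> \<le> L"
proof (rule tendsto_upperbound)
  show "((\<lambda>h. \<bar>(g (x + h) - g x) / h\<bar>) \<longlongrightarrow> \<bar>D\<bar>) (at 0)"
    using deriv unfolding DERIV_def by (rule tendsto_rabs)
  have "\<bar>g (x + h) - g x\<bar> \<le> L * \<bar>h\<bar>" for h
    using lipschitz_onD[OF lip, of "x + h" x] by (simp add: dist_real_def)
  then show "\<forall>\<^sub>F h in at 0. \<bar>(g (x + h) - g x) / h\<bar> \<le> L"
    by (auto simp: eventually_at_filter divide_le_eq)
qed simp

definition add_measure :: "'a::topological_space measure \<Rightarrow> 'a measure \<Rightarrow> 'a measure" where
  "add_measure M N = measure_of UNIV (sets borel) (\<lambda>A. emeasure M A + emeasure N A)"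

lemma sets_add_measure [simp]: "sets (add_measure M N) = sets borel"
  unfolding add_measure_def by (metis sets.sigma_sets_eq sets_measure_of sets.space_closed space_borel)

lemma emeasure_add_measure:
  assumes "sets M = sets borel" "sets N = sets borel" "A \<in> sets borel"
  shows "emeasure (add_measure M N) A = emeasure M A + emeasure N A"
  unfolding add_measure_def
proof (rule emeasure_measure_of_sigma)
  show "sigma_algebra UNIV (sets borel)"
    by (metis sets.sigma_algebra_axioms space_borel)
  show "countably_additive (sets borel) (\<lambda>A. emeasure M A + emeasure N A)"
    unfolding countably_additive_def
  proof (intro allI impI)
    fix F :: "nat \<Rightarrow> 'a set"
    assume F: "range F \<subseteq> sets borel" "disjoint_family F" "\<Union> (range F) \<in> sets borel"
    have "(\<Sum>i. emeasure M (F i) + emeasure N (F i)) = (\<Sum>i. emeasure M (F i)) + (\<Sum>i. emeasure N (F i))"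
      by (simp add: suminf_add)
    also have "\<dots> = emeasure M (\<Union> (range F)) + emeasure N (\<Union> (range F))"
      using F assms by (simp add: suminf_emeasure)
    finally show "(\<Sum>i. emeasure M (F i) + emeasure N (F i)) = emeasure M (\<Union> (range F)) + emeasure N (\<Union> (range F))" .
  qed
qed (use assms in \<open>auto simp: positive_def\<close>)

lemma add_interval_measure_linear:
  fixes G H :: "real \<Rightarrow> real"
  assumes "mono G" "mono H" "continuous_on UNIV G" "continuous_on UNIV H"
    and sum: "\<And>x. G x + H x = c * x" and "c \<ge> 0"
  shows "add_measure (interval_measure G) (interval_measure H) = density lborel (\<lambda>_. ennreal c)"
proof -
  have mG: "\<And>x y. x \<le> y \<Longrightarrow> G x \<le> G y" and mH: "\<And>x y. x \<le> y \<Longrightarrow> H x \<le> H y"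
    using assms by (auto dest: monoD)
  have rcG: "continuous (at_right x) G" and rcH: "continuous (at_right x) H" for x
    using assms by (metis UNIV_I continuous_on_eq_continuous_within continuous_within_subset top_greatest)+
  let ?E = "range (\<lambda>(a, b). {a <.. b::real})"
  let ?A = "(\<lambda>(a, b). {a <.. b::real}) ` (\<rat> \<times> \<rat>)"
  have on_intervals: "emeasure (add_measure (interval_measure G) (interval_measure H)) X
      = emeasure (density lborel (\<lambda>_. ennreal c)) X" if "X \<in> ?E" for X
  proof -
    from that obtain a b where X: "X = {a<..b}" by auto
    have "emeasure (add_measure (interval_measure G) (interval_measure H)) X
        = emeasure (interval_measure G) X + emeasure (interval_measure H) X"
      by (simp add: X emeasure_add_measure)
    also have "\<dots> = (if a \<le> b then ennreal (c * (b - a)) else 0)"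
      using sum[of a] sum[of b] mG[of a b] mH[of a b]
      by (auto simp add: X emeasure_interval_measure_Ioc_eq mG mH rcG rcH ennreal_plus[symmetric]
          algebra_simps simp del: ennreal_plus)
    also have "\<dots> = emeasure (density lborel (\<lambda>_. ennreal c)) X"
      using \<open>c \<ge> 0\<close> by (auto simp: X emeasure_density nn_integral_cmult_indicator ennreal_mult)
    finally show ?thesis .
  qed
  show ?thesis
  proof (rule measure_eqI_generator_eq_countable[where E = ?E and \<Omega> = UNIV and A = ?A])
    show "Int_stable ?E"
      by (auto simp: Int_stable_def image_def) metis
    show "sets (add_measure (interval_measure G) (interval_measure H)) = sigma_sets UNIV ?E"
      by (simp add: borel_sigma_sets_Ioc)
    show "sets (density lborel (\<lambda>_. ennreal c)) = sigma_sets UNIV ?E"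
      by (simp add: borel_sigma_sets_Ioc)
    show "\<Union> ?A = UNIV"
      by (auto intro!: Rats_no_top_le Rats_no_bot_less)
    show "countable ?A"
      by (intro countable_image countable_SIGMA countable_rat)
    show "emeasure (add_measure (interval_measure G) (interval_measure H)) X \<noteq> \<infinity>" if "X \<in> ?A" for X
    proof -
      from that obtain x y where X: "X = {x<..y}" by auto
      have "emeasure lborel {x<..y} \<noteq> \<infinity>"
        by (cases "x \<le> y") auto
      moreover have "X \<in> ?E" using X by auto
      ultimately show ?thesis
        using on_intervals[of X] X
        by (auto simp: emeasure_density nn_integral_cmult_indicator ennreal_mult_eq_top_iff)
    qed
  qed (use on_intervals in auto)
qed

lemma absolutely_continuous_interval_measure:
  fixes G H :: "real \<Rightarrow> real"
  assumes "mono G" "mono H" "continuous_on UNIV G" "continuous_on UNIV H"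
    and "\<And>x. G x + H x = c * x" and "c \<ge> 0"
  shows "absolutely_continuous lborel (interval_measure G)"
  unfolding absolutely_continuous_def
proof
  fix A :: "real set" assume A: "A \<in> null_sets lborel"
  then have "A \<in> sets borel" by auto
  have "emeasure (interval_measure G) A
      \<le> emeasure (add_measure (interval_measure G) (interval_measure H)) A"
    using \<open>A \<in> sets borel\<close> by (simp add: emeasure_add_measure)
  also have "\<dots> = 0"
    using A \<open>A \<in> sets borel\<close> by (simp add: add_interval_measure_linear[OF assms] emeasure_density
        nn_integral_cmult_indicator null_setsD1)
  finally show "A \<in> null_sets (interval_measure G)"
    using \<open>A \<in> sets borel\<close> by (simp add: null_sets_def)
qed

lemma interval_measure_density_has_integral:
  fixes G :: "real \<Rightarrow> real"
  assumes h: "h \<in> borel_measurable borel" and dens: "density lborel h = interval_measure G"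
    and "mono G" "continuous_on UNIV G" and "a \<le> b"
  shows "((\<lambda>x. enn2real (h x)) has_integral (G b - G a)) {a..b}"
proof -
  have "emeasure (density lborel h) {a..b} = ennreal (G b - G a)"
    unfolding dens using assms by (intro emeasure_interval_measure_Icc) (auto dest: monoD)
  then have I: "(\<integral>\<^sup>+x. h x * indicator {a..b} x \<partial>lborel) = ennreal (G b - G a)"
    using h by (simp add: emeasure_density)
  have "AE x in lborel. h x * indicator {a..b} x \<noteq> \<infinity>"
    using I h by (intro nn_integral_PInf_AE) auto
  then have "AE x in lborel. ennreal (enn2real (h x) * indicator {a..b} x) = h x * indicator {a..b} x"
    by eventually_elim (auto simp: indicator_def ennreal_enn2real_if)
  then have "(\<integral>\<^sup>+x. ennreal (enn2real (h x) * indicator {a..b} x) \<partial>lborel) = ennreal (G b - G a)"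
    using I by (simp add: nn_integral_cong_AE)
  then have "((\<lambda>x. enn2real (h x) * indicator {a..b} x) has_integral (G b - G a)) UNIV"
    using h \<open>mono G\<close> \<open>a \<le> b\<close> by (intro nn_integral_has_integral) (auto dest: monoD)
  moreover have "(\<lambda>x. enn2real (h x) * indicator {a..b} x) = (\<lambda>x. if x \<in> {a..b} then enn2real (h x) else 0)"
    by (auto simp: indicator_def)
  ultimately show ?thesis
    using has_integral_restrict_UNIV[where s = "{a..b}" and f = "\<lambda>x. enn2real (h x)"] by simp
qed

lemma lipschitz_indefinite_integral:
  fixes g :: "real \<Rightarrow> real"
  assumes lip: "L-lipschitz_on UNIV g"
  obtains k where "k \<in> borel_measurable borel"
    "\<And>a b. a \<le> b \<Longrightarrow> (k has_integral (g b - g a)) {a..b}"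
proof -
  have "0 \<le> L" using lip by (rule lipschitz_on_nonneg)
  have "continuous_on UNIV g" using lip by (rule lipschitz_on_continuous_on)
  define G where "G x = g x + L * x" for x
  define H where "H x = L * x - g x" for x
  have "g x + L * x \<le> g y + L * y \<and> L * x - g x \<le> L * y - g y" if "x \<le> y" for x y
    using lipschitz_onD[OF lip, of y x] that by (auto simp: dist_real_def abs_le_iff algebra_simps)
  then have "mono G" "mono H"
    unfolding mono_def G_def H_def by auto
  moreover have "continuous_on UNIV G" "continuous_on UNIV H"
    unfolding G_def H_def by (intro continuous_intros \<open>continuous_on UNIV g\<close>)+
  moreover have "G x + H x = (2 * L) * x" for x by (simp add: G_def H_def)
  ultimately have ac: "absolutely_continuous lborel (interval_measure G)"
    using \<open>0 \<le> L\<close> by (intro absolutely_continuous_interval_measure[of G H "2 * L"]) auto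
  then obtain h where h: "h \<in> borel_measurable borel" and dens: "density lborel h = interval_measure G"
    using sigma_finite_measure.Radon_Nikodym[OF sigma_finite_lborel ac] by auto
  show thesis
  proof
    show "(\<lambda>x. enn2real (h x) - L) \<in> borel_measurable borel" using h by measurable
    show "((\<lambda>x. enn2real (h x) - L) has_integral (g b - g a)) {a..b}" if "a \<le> b" for a b
      using has_integral_diff[OF interval_measure_density_has_integral[OF h dens \<open>mono G\<close>
            \<open>continuous_on UNIV G\<close> that] has_integral_const_real[of L a b]] that
      by (simp add: G_def algebra_simps)
  qed
qed

lemma lipschitz_integral_of_derivative:
  fixes g :: "real \<Rightarrow> real"
  assumes lip: "L-lipschitz_on UNIV g"
  obtains N k where "negligible N" "\<And>x. x \<notin> N \<Longrightarrow> (g has_real_derivative k x) (at x)"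
    "k \<in> borel_measurable borel" "\<And>x. \<bar>k x\<bar> \<le> L"
    "\<And>a b. a \<le> b \<Longrightarrow> (k has_integral (g b - g a)) {a..b}"
proof -
  obtain k0 where "k0 \<in> borel_measurable borel"
    and k0_int: "\<And>a b. a \<le> b \<Longrightarrow> (k0 has_integral (g b - g a)) {a..b}"
    using lipschitz_indefinite_integral[OF lip] by blast
  obtain N where "negligible N" and k0_deriv: "\<And>x. x \<notin> N \<Longrightarrow> (g has_real_derivative k0 x) (at x)"
    using ae_derivative_of_indefinite_integral[OF k0_int] by blast
  \<comment> \<open>Clipping to [-L, L] keeps k Borel measurable and changes k0 only inside N.\<close>
  define k where "k x = max (- L) (min L (k0 x))" for x
  have k_k0: "k x = k0 x" if "x \<notin> N" for x
    using lipschitz_has_real_derivative_abs_le[OF lip k0_deriv[OF that]] by (auto simp: k_def)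
  show thesis
  proof
    show "negligible N" by fact
    show "(g has_real_derivative k x) (at x)" if "x \<notin> N" for x
      using k0_deriv[OF that] k_k0[OF that] by simp
    show "k \<in> borel_measurable borel"
      unfolding k_def using \<open>k0 \<in> borel_measurable borel\<close> by measurable
    show "\<bar>k x\<bar> \<le> L" for x
      using lipschitz_on_nonneg[OF lip] by (auto simp: k_def)
    show "(k has_integral (g b - g a)) {a..b}" if "a \<le> b" for a b
      by (rule has_integral_spike[OF \<open>negligible N\<close> _ k0_int[OF that]]) (simp add: k_k0)
  qed
qed

section \<open>The stretch map on the unit circle\<close>

lemma periodic_shift_int:
  fixes f :: "real \<Rightarrow> 'a"
  assumes per: "\<And>x. f (x + p) = f x"
  shows "f (x + p * of_int n) = f x"
proof -
  have shift_nat: "f (y + p * of_nat m) = f y" for y m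
  proof (induction m)
    case (Suc m)
    have "f (y + p * of_nat (Suc m)) = f ((y + p * of_nat m) + p)"
      by (simp add: algebra_simps)
    with per Suc show ?case by simp
  qed simp
  show ?thesis
  proof (cases n)
    case (nonneg m)
    then show ?thesis using shift_nat[of x m] by simp
  next
    case (neg m)
    have "f x = f ((x + p * of_int n) + p * of_nat (Suc m))" by (simp add: neg algebra_simps)
    also have "\<dots> = f (x + p * of_int n)" by (rule shift_nat)
    finally show ?thesis by simp
  qed
qed

lemma periodic_has_real_derivative_shift:
  assumes per: "\<And>x. f (x + p) = f x" and deriv: "(f has_real_derivative D) (at x)"
  shows "(f has_real_derivative D) (at (x + p * of_int n))"
proof -
  have "((\<lambda>y. f (y + p * of_int (- n))) has_real_derivative D * 1) (at (x + p * of_int n))"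
    by (rule DERIV_chain2[of f]) (use deriv in \<open>auto intro!: derivative_eq_intros\<close>)
  moreover have "(\<lambda>y. f (y + p * of_int (- n))) = f"
    by (rule ext) (rule periodic_shift_int[of f, OF per])
  ultimately show ?thesis by simp
qed

lemma periodic_eq_on_period_imp_eq:
  fixes f :: "real \<Rightarrow> 'a"
  assumes "p > 0" and per: "\<And>x. f (x + p) = f x" and eq: "\<And>x. x \<in> {0..p} \<Longrightarrow> f x = c"
  shows "f x = c"
proof -
  have "f x = f (x + p * of_int (- \<lfloor>x / p\<rfloor>))"
    by (rule periodic_shift_int[of f, OF per, symmetric])
  also have "\<dots> = c"
  proof (rule eq)
    have "of_int \<lfloor>x / p\<rfloor> * p \<le> x" "x < (of_int \<lfloor>x / p\<rfloor> + 1) * p"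
      using floor_divide_lower[OF \<open>p > 0\<close>] floor_divide_upper[OF \<open>p > 0\<close>] by auto
    then show "x + p * of_int (- \<lfloor>x / p\<rfloor>) \<in> {0..p}"
      by (simp add: algebra_simps)
  qed
  finally show ?thesis .
qed

lemma Arg_cis_eq_shift:
  obtains n :: int where "Arg (cis t) = t + 2 * pi * of_int n"
proof
  show "Arg (cis t) = t + 2 * pi * of_int (- \<lceil>t / (2 * pi) - 1 / 2\<rceil>)"
    using Arg_rcis'[of 1 t] by (simp add: rcis_def normalize_angle_def)
qed

lemma has_derivative_Arg:
  assumes "z \<notin> \<real>\<^sub>\<le>\<^sub>0"
  shows "(Arg has_derivative (\<lambda>h. Im (h / z))) (at z)"
proof -
  have "z \<noteq> 0" using assms by auto
  have Ln: "((\<lambda>z. Im (Ln z)) has_derivative (\<lambda>h. Im (h / z))) (at z)"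
    using has_field_derivative_Ln[OF assms]
    by (auto intro!: derivative_eq_intros simp: has_field_derivative_def divide_inverse mult.commute)
  show ?thesis
    by (rule has_derivative_transform_within_open[OF Ln, of "- {0}"])
      (auto simp: \<open>z \<noteq> 0\<close> Arg_eq_Im_Ln)
qed

lemma cis_notin_nonpos_Reals:
  assumes "\<theta> \<in> {0..2*pi}" "\<theta> \<noteq> pi"
  shows "cis \<theta> \<notin> \<real>\<^sub>\<le>\<^sub>0"
proof
  assume "cis \<theta> \<in> \<real>\<^sub>\<le>\<^sub>0"
  then have "sin \<theta> = 0" and "cos \<theta> \<le> 0" by (auto simp: complex_nonpos_Reals_iff)
  from \<open>sin \<theta> = 0\<close> obtain n :: int where n: "\<theta> = of_int n * pi" by (auto simp: sin_zero_iff_int2)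
  with assms(1) have "0 \<le> n" "n \<le> 2"
    using pi_gt_zero by (auto simp: zero_le_mult_iff mult_le_cancel_right)
  then have "n = 0 \<or> n = 1 \<or> n = 2" by auto
  then show False using n \<open>cos \<theta> \<le> 0\<close> assms(2) by auto
qed

lemma stretch_map_cis:
  assumes per: "\<And>x. R (x + 2 * pi) = R x"
  shows "stretch_map R (cis t) = complex_of_real (R t) * cis t"
proof -
  obtain n :: int where "Arg (cis t) = t + 2 * pi * of_int n" by (rule Arg_cis_eq_shift)
  then show ?thesis unfolding stretch_map_def by (simp add: periodic_shift_int[of R, OF per])
qed

lemma stretch_map_has_derivative:
  assumes per: "\<And>x. R (x + 2 * pi) = R x" and deriv: "(R has_real_derivative D) (at \<theta>)"
    and "cis \<theta> \<notin> \<real>\<^sub>\<le>\<^sub>0"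
  shows "(stretch_map R has_derivative
          (\<lambda>h. complex_of_real (D * Im (h / cis \<theta>)) * cis \<theta> + complex_of_real (R \<theta>) * h)) (at (cis \<theta>))"
proof -
  obtain n :: int where n: "Arg (cis \<theta>) = \<theta> + 2 * pi * of_int n" by (rule Arg_cis_eq_shift)
  have "(R has_derivative (\<lambda>x. D * x)) (at (Arg (cis \<theta>)))"
    using periodic_has_real_derivative_shift[OF per deriv, of n]
    by (simp add: n has_field_derivative_def)
  from has_derivative_compose[OF has_derivative_Arg[OF assms(3)] this]
  have "((\<lambda>z. R (Arg z)) has_derivative (\<lambda>h. D * Im (h / cis \<theta>))) (at (cis \<theta>))" .
  then have "((\<lambda>z. complex_of_real (R (Arg z)) * z) has_derivative
      (\<lambda>h. complex_of_real (D * Im (h / cis \<theta>)) * cis \<theta> + complex_of_real (R (Arg (cis \<theta>))) * h)) (at (cis \<theta>))"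
    by (auto intro!: derivative_eq_intros)
  then show ?thesis
    by (simp add: stretch_map_def[abs_def] n periodic_shift_int[of R, OF per])
qed

lemma
  assumes "\<And>x. R (x + 2 * pi) = R x" and "(R has_real_derivative D) (at \<theta>)"
    and "cis \<theta> \<notin> \<real>\<^sub>\<le>\<^sub>0"
  shows wirt_d_stretch_map: "wirt_d (stretch_map R) (cis \<theta>) = Complex (R \<theta>) (- D / 2)"
    and wirt_dbar_stretch_map: "wirt_dbar (stretch_map R) (cis \<theta>) = \<i> * complex_of_real (D / 2) * cis (2 * \<theta>)"
proof -
  let ?Df = "frechet_derivative (stretch_map R) (at (cis \<theta>))"
  have Df: "?Df = (\<lambda>h. complex_of_real (D * Im (h / cis \<theta>)) * cis \<theta> + complex_of_real (R \<theta>) * h)"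
    using frechet_derivative_at[OF stretch_map_has_derivative[OF assms]] by simp
  have Df_1: "?Df 1 = complex_of_real (R \<theta>) - complex_of_real (D * sin \<theta>) * cis \<theta>"
    by (simp add: Df divide_inverse)
  have Df_i: "?Df \<i> = \<i> * complex_of_real (R \<theta>) + complex_of_real (D * cos \<theta>) * cis \<theta>"
    by (simp add: Df divide_inverse)
  have "?Df 1 - \<i> * ?Df \<i> = 2 * R \<theta> - D * (cis \<theta> * (complex_of_real (sin \<theta>) + \<i> * complex_of_real (cos \<theta>)))"
    unfolding Df_1 Df_i by (simp add: algebra_simps)
  moreover have "cis \<theta> * (complex_of_real (sin \<theta>) + \<i> * complex_of_real (cos \<theta>)) = \<i>"
    by (simp add: complex_eq_iff algebra_simps)
  ultimately show "wirt_d (stretch_map R) (cis \<theta>) = Complex (R \<theta>) (- D / 2)"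
    unfolding wirt_d_def by (simp add: complex_eq_iff)
  have "?Df 1 + \<i> * ?Df \<i> = - D * (cis \<theta> * (complex_of_real (sin \<theta>) - \<i> * complex_of_real (cos \<theta>)))"
    unfolding Df_1 Df_i by (simp add: algebra_simps)
  moreover have "cis \<theta> * (complex_of_real (sin \<theta>) - \<i> * complex_of_real (cos \<theta>)) = - \<i> * cis (2 * \<theta>)"
    by (simp add: complex_eq_iff sin_double cos_double power2_eq_square; simp add: algebra_simps)
  ultimately show "wirt_dbar (stretch_map R) (cis \<theta>) = \<i> * complex_of_real (D / 2) * cis (2 * \<theta>)"
    unfolding wirt_dbar_def by simp
qed

lemma stretch_dilatation_ratios:
  fixes r D \<phi> :: real
  assumes "r > 0"
  defines "w \<equiv> Complex r (- D / 2)"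
  defines "\<mu> \<equiv> \<i> * complex_of_real (D / 2) * cis \<phi> / w"
  shows "(cmod (cis \<phi> - \<mu>))\<^sup>2 / (1 - (cmod \<mu>)\<^sup>2) = 1 + (D / r)\<^sup>2"
    and "(cmod (cis \<phi> + \<mu>))\<^sup>2 / (1 - (cmod \<mu>)\<^sup>2) = 1"
proof -
  have "w \<noteq> 0" using \<open>r > 0\<close> by (simp add: w_def complex_eq_iff)
  then have "(cmod w)\<^sup>2 > 0" by simp
  have w_minus: "Complex r (- D) = w - \<i> * complex_of_real (D / 2)"
    by (simp add: w_def complex_eq_iff)
  have "cis \<phi> - \<mu> = cis \<phi> * (Complex r (- D) / w)"
    unfolding w_minus \<mu>_def using \<open>w \<noteq> 0\<close> by (simp add: field_simps)
  then have minus: "(cmod (cis \<phi> - \<mu>))\<^sup>2 = (r\<^sup>2 + D\<^sup>2) / (cmod w)\<^sup>2"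
    by (simp add: norm_mult norm_divide power_divide cmod_power2)
  have w_plus: "complex_of_real r = w + \<i> * complex_of_real (D / 2)"
    by (simp add: w_def complex_eq_iff)
  have "cis \<phi> + \<mu> = cis \<phi> * (complex_of_real r / w)"
    unfolding w_plus \<mu>_def using \<open>w \<noteq> 0\<close> by (simp add: field_simps)
  then have plus: "(cmod (cis \<phi> + \<mu>))\<^sup>2 = r\<^sup>2 / (cmod w)\<^sup>2"
    by (simp add: norm_mult norm_divide power_divide)
  have mu_sq: "(cmod \<mu>)\<^sup>2 = (D\<^sup>2 / 4) / (cmod w)\<^sup>2"
    by (simp add: \<mu>_def norm_mult norm_divide power_divide power_mult_distrib)
  have w_sq: "(cmod w)\<^sup>2 = r\<^sup>2 + D\<^sup>2 / 4"
    by (simp add: w_def cmod_power2 power_divide)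
  have den: "1 - (cmod \<mu>)\<^sup>2 = r\<^sup>2 / (cmod w)\<^sup>2"
    using \<open>(cmod w)\<^sup>2 > 0\<close> unfolding mu_sq w_sq by (simp add: field_simps)
  show "(cmod (cis \<phi> - \<mu>))\<^sup>2 / (1 - (cmod \<mu>)\<^sup>2) = 1 + (D / r)\<^sup>2"
    unfolding minus den using \<open>(cmod w)\<^sup>2 > 0\<close> \<open>r > 0\<close> by (simp add: field_simps)
  show "(cmod (cis \<phi> + \<mu>))\<^sup>2 / (1 - (cmod \<mu>)\<^sup>2) = 1"
    unfolding plus den using \<open>(cmod w)\<^sup>2 > 0\<close> \<open>r > 0\<close> by simp
qed

lemma
  assumes "\<And>x. R (x + 2 * pi) = R x" and "(R has_real_derivative D) (at \<theta>)"
    and "cis \<theta> \<notin> \<real>\<^sub>\<le>\<^sub>0" and "R \<theta> > 0"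
  shows a0_stretch_map: "a0 (stretch_map R) \<theta> = 1 + (D / R \<theta>)\<^sup>2"
    and a1_stretch_map: "a1 (stretch_map R) \<theta> = 1"
  unfolding a0_def a1_def dilatation_def wirt_d_stretch_map[OF assms(1-3)]
    wirt_dbar_stretch_map[OF assms(1-3)]
  by (rule stretch_dilatation_ratios[OF \<open>R \<theta> > 0\<close>, where D = D and \<phi> = "2 * \<theta>"])+

lemma pw_stretch_map:
  assumes per: "\<And>x. R (x + 2 * pi) = R x" and deriv: "(R has_real_derivative D) (at \<theta>)"
  shows "pw q (stretch_map R) \<theta> = q (complex_of_real (R \<theta>) * cis \<theta>) * sqrt ((R \<theta>)\<^sup>2 + D\<^sup>2)"
proof -
  have "((\<lambda>t. complex_of_real (R t) * cis t) has_vector_derivative cis \<theta> * Complex D (R \<theta>)) (at \<theta>)"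
    using deriv unfolding has_vector_derivative_def has_field_derivative_def
    by (auto intro!: derivative_eq_intros simp: fun_eq_iff complex_eq_iff algebra_simps scaleR_conv_of_real)
  then have "vector_derivative (\<lambda>t. stretch_map R (cis t)) (at \<theta>) = cis \<theta> * Complex D (R \<theta>)"
    by (simp add: stretch_map_cis[of R, OF per] vector_derivative_at)
  then show ?thesis
    by (simp add: pw_def stretch_map_cis[of R, OF per] norm_mult complex_norm add.commute)
qed

section \<open>Mean values on an interval\<close>

lemma nonneg_integral_eq_0_imp_ae_0:
  fixes f :: "real \<Rightarrow> real"
  assumes f: "f integrable_on {a..b}" and nonneg: "\<And>x. x \<in> {a..b} \<Longrightarrow> 0 \<le> f x"
    and "integral {a..b} f = 0"
  obtains N where "negligible N" "\<And>x. x \<in> {a..b} - N \<Longrightarrow> f x = 0"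
proof -
  have "{a..b} \<in> sets lebesgue"
    by (metis cbox_interval fmeasurableD lmeasurable_cbox)
  with nonnegative_absolutely_integrable_1[OF f nonneg]
  have "integrable (lebesgue_on {a..b}) f"
    by (rule absolutely_integrable_imp_integrable)
  moreover have "integral\<^sup>L (lebesgue_on {a..b}) f = 0"
    using has_integral_integral_lebesgue_on[OF calculation] \<open>integral {a..b} f = 0\<close>
    by (simp add: integral_unique)
  ultimately have "AE x in lebesgue_on {a..b}. f x = 0"
    using nonneg by (subst integral_nonneg_eq_0_iff_AE[symmetric]) auto
  then obtain N where N: "{x \<in> space (lebesgue_on {a..b}). f x \<noteq> 0} \<subseteq> N"
    "N \<in> null_sets (lebesgue_on {a..b})"
    by (auto elim!: AE_E simp: null_sets_def)
  then have "negligible N"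
    by (simp add: null_sets_restrict_space negligible_iff_null_sets)
  then show thesis
    using N(1) by (intro that) auto
qed

lemma integral_pos_if_ae_pos:
  fixes f :: "real \<Rightarrow> real"
  assumes f: "f integrable_on {a..b}" and "a < b" and "negligible N"
    and nonneg: "\<And>x. x \<in> {a..b} \<Longrightarrow> 0 \<le> f x" and pos: "\<And>x. x \<in> {a..b} - N \<Longrightarrow> 0 < f x"
  shows "integral {a..b} f > 0"
proof (rule ccontr)
  assume "\<not> integral {a..b} f > 0"
  with integral_nonneg[OF f nonneg] have "integral {a..b} f = 0" by simp
  then obtain N' where "negligible N'" and N': "\<And>x. x \<in> {a..b} - N' \<Longrightarrow> f x = 0"
    using nonneg_integral_eq_0_imp_ae_0[OF f nonneg] by blast
  have "{a..b} \<subseteq> N \<union> N'"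
    using pos N' by force
  then have "negligible {a..b}"
    using negligible_Un[OF \<open>negligible N\<close> \<open>negligible N'\<close>] negligible_subset by blast
  with \<open>a < b\<close> show False
    using negligible_interval(1)[of a b] by simp
qed

lemma Cauchy_Schwarz_integral:
  fixes P :: "real \<Rightarrow> real"
  assumes P: "P integrable_on {a..b}" and P2: "(\<lambda>x. (P x)\<^sup>2) integrable_on {a..b}" and "a < b"
  shows "(integral {a..b} P)\<^sup>2 \<le> (b - a) * integral {a..b} (\<lambda>x. (P x)\<^sup>2)"
proof -
  define I1 where "I1 = integral {a..b} P"
  define I2 where "I2 = integral {a..b} (\<lambda>x. (P x)\<^sup>2)"
  define m where "m = I1 / (b - a)"
  have "((\<lambda>x. (P x)\<^sup>2 - (2 * m) * P x + m\<^sup>2) has_integral (I2 - (2 * m) * I1 + m\<^sup>2 * (b - a))) {a..b}"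
    using has_integral_const_real[of "m\<^sup>2" a b] \<open>a < b\<close> P P2 unfolding I1_def I2_def
    by (intro has_integral_add has_integral_diff has_integral_mult_right integrable_integral)
      (auto simp: mult.commute)
  moreover have "(\<lambda>x. (P x)\<^sup>2 - (2 * m) * P x + m\<^sup>2) = (\<lambda>x. (P x - m)\<^sup>2)"
    by (auto simp: power2_eq_square algebra_simps)
  ultimately have "0 \<le> I2 - (2 * m) * I1 + m\<^sup>2 * (b - a)"
    by (metis (no_types, lifting) has_integral_nonneg zero_le_power2)
  also have "\<dots> = I2 - I1\<^sup>2 / (b - a)"
  proof -
    have "I2 - (2 * (I1 / d)) * I1 + (I1 / d)\<^sup>2 * d = I2 - I1\<^sup>2 / d" if "d > 0" for d
      using that by (simp add: power2_eq_square field_simps)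
    then show ?thesis using \<open>a < b\<close> by (simp add: m_def)
  qed
  finally show ?thesis
    using \<open>a < b\<close> unfolding I1_def[symmetric] I2_def[symmetric] by (simp add: field_simps)
qed

lemma mean_square_div_square_mean_ge_1:
  fixes P :: "real \<Rightarrow> real"
  assumes P: "P integrable_on {a..b}" and P2: "(\<lambda>x. (P x)\<^sup>2) integrable_on {a..b}" and "a < b"
    and "negligible N" and "\<And>x. x \<in> {a..b} \<Longrightarrow> 0 \<le> P x" and "\<And>x. x \<in> {a..b} - N \<Longrightarrow> 0 < P x"
  shows "(integral {a..b} (\<lambda>x. (P x)\<^sup>2) / (b - a)) / (integral {a..b} P / (b - a))\<^sup>2 \<ge> 1"
proof -
  have ratio: "(I2 / d) / (I1 / d)\<^sup>2 \<ge> 1" if "d > 0" "I1 > 0" "I1\<^sup>2 \<le> d * I2" for d I1 I2 :: real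
  proof -
    have "(I2 / d) / (I1 / d)\<^sup>2 = d * I2 / I1\<^sup>2"
      using that by (simp add: field_simps power2_eq_square)
    then show ?thesis using that by (simp add: le_divide_eq)
  qed
  show ?thesis
  proof (rule ratio)
    show "integral {a..b} P > 0"
      using integral_pos_if_ae_pos[OF P] assms(3-) by blast
    show "(integral {a..b} P)\<^sup>2 \<le> (b - a) * integral {a..b} (\<lambda>x. (P x)\<^sup>2)"
      using Cauchy_Schwarz_integral[OF P P2 \<open>a < b\<close>] .
  qed (use \<open>a < b\<close> in simp)
qed

lemma integrable_on_interval_if_bounded_measurable:
  fixes f :: "real \<Rightarrow> real"
  assumes "f \<in> borel_measurable (lebesgue_on {a..b})" and "\<And>x. x \<in> {a..b} \<Longrightarrow> \<bar>f x\<bar> \<le> B"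
  shows "f integrable_on {a..b}"
proof (rule measurable_bounded_by_integrable_imp_integrable[OF assms(1)])
  show "(\<lambda>_. B) integrable_on {a..b}" by (rule integrable_const_ivl)
  show "norm (f x) \<le> B" if "x \<in> {a..b}" for x using assms(2)[OF that] by simp
  show "{a..b} \<in> sets lebesgue" by (metis cbox_interval fmeasurableD lmeasurable_cbox)
qed

lemma ae_positive_bounded_clip:
  fixes Q :: "real \<Rightarrow> real"
  assumes "Q \<in> borel_measurable lebesgue"
    and "AE x in lebesgue. Q x \<le> B" and "AE x in lebesgue. 0 < Q x"
  obtains Q' N where "Q' \<in> borel_measurable lebesgue" "\<And>x. 0 \<le> Q' x \<and> Q' x \<le> max 0 B"
    "negligible N" "\<And>x. x \<notin> N \<Longrightarrow> Q' x = Q x \<and> 0 < Q x"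
proof -
  have "AE x in lebesgue. 0 < Q x \<and> Q x \<le> B"
    using assms(2,3) by eventually_elim auto
  then obtain N where N: "{x \<in> space lebesgue. \<not> (0 < Q x \<and> Q x \<le> B)} \<subseteq> N"
    "emeasure lebesgue N = 0" "N \<in> sets lebesgue"
    by (rule AE_E)
  have good: "0 < Q x \<and> Q x \<le> B" if "x \<notin> N" for x
    using N(1) that by auto
  show thesis
  proof
    show "(\<lambda>x. max 0 (min B (Q x))) \<in> borel_measurable lebesgue"
      using assms(1) by measurable
    show "negligible N"
      using N(2,3) by (simp add: negligible_iff_null_sets null_sets_def)
  qed (use good in auto)
qed

section \<open>Starlike domains with Lipschitz radius\<close>

locale starlike_radius =
  fixes R :: "real \<Rightarrow> real" and L :: real
  assumes R_pos: "\<And>\<theta>. R \<theta> > 0"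
    and R_periodic: "\<And>\<theta>. R (\<theta> + 2 * pi) = R \<theta>"
    and R_lipschitz: "L-lipschitz_on UNIV R"
begin

lemma R_borel_measurable: "R \<in> borel_measurable borel"
  by (intro borel_measurable_continuous_onI lipschitz_on_continuous_on[OF R_lipschitz])

lemma R_continuous_on_period: "continuous_on {0..2*pi} R"
  using lipschitz_on_continuous_on[OF R_lipschitz] by (rule continuous_on_subset) simp

lemma R_lower_bound:
  obtains m where "0 < m" "\<And>\<theta>. \<theta> \<in> {0..2*pi} \<Longrightarrow> m \<le> R \<theta>"
proof -
  have "{0..2*pi::real} \<noteq> {}" using pi_gt_zero by simp
  then obtain \<theta>0 where "\<And>\<theta>. \<theta> \<in> {0..2*pi} \<Longrightarrow> R \<theta>0 \<le> R \<theta>"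
    using continuous_attains_inf[OF compact_Icc _ R_continuous_on_period] by blast
  with R_pos show thesis by (rule that)
qed

lemma R_upper_bound:
  obtains M where "\<And>\<theta>. \<theta> \<in> {0..2*pi} \<Longrightarrow> R \<theta> \<le> M"
proof -
  have "{0..2*pi::real} \<noteq> {}" using pi_gt_zero by simp
  then obtain \<theta>1 where "\<And>\<theta>. \<theta> \<in> {0..2*pi} \<Longrightarrow> R \<theta> \<le> R \<theta>1"
    using continuous_attains_sup[OF compact_Icc _ R_continuous_on_period] by blast
  then show thesis by (rule that)
qed

lemma deriv_ln_R:
  assumes "(R has_real_derivative D) (at \<theta>)"
  shows "deriv (\<lambda>t. ln (R t)) \<theta> = D / R \<theta>"
proof -
  have "((\<lambda>t. ln (R t)) has_real_derivative (1 / R \<theta>) * D) (at \<theta>)"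
    by (rule DERIV_chain2[OF DERIV_ln_divide assms]) (use R_pos in auto)
  then show ?thesis by (simp add: DERIV_imp_deriv)
qed

lemma stretch_map_at_differentiable_point:
  assumes "(R has_real_derivative D) (at \<theta>)" and "\<theta> \<in> {0..2*pi}" "\<theta> \<noteq> pi"
  shows "a0 (stretch_map R) \<theta> = 1 + (deriv (\<lambda>t. ln (R t)) \<theta>)\<^sup>2"
    and "a1 (stretch_map R) \<theta> = 1"
    and "pw q (stretch_map R) \<theta> = sqrt ((R \<theta>)\<^sup>2 + (deriv R \<theta>)\<^sup>2) * q (complex_of_real (R \<theta>) * cis \<theta>)"
proof -
  have "cis \<theta> \<notin> \<real>\<^sub>\<le>\<^sub>0" using assms(2,3) by (rule cis_notin_nonpos_Reals)
  then show "a0 (stretch_map R) \<theta> = 1 + (deriv (\<lambda>t. ln (R t)) \<theta>)\<^sup>2"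
    and "a1 (stretch_map R) \<theta> = 1"
    using a0_stretch_map[of R, OF R_periodic assms(1)] a1_stretch_map[of R, OF R_periodic assms(1)]
      R_pos deriv_ln_R[OF assms(1)] by simp_all
  show "pw q (stretch_map R) \<theta> = sqrt ((R \<theta>)\<^sup>2 + (deriv R \<theta>)\<^sup>2) * q (complex_of_real (R \<theta>) * cis \<theta>)"
    using pw_stretch_map[of R, OF R_periodic assms(1)] DERIV_imp_deriv[OF assms(1)] by simp
qed

lemma deriv_ln_R_square_integrable:
  "(\<lambda>\<theta>. (deriv (\<lambda>t. ln (R t)) \<theta>)\<^sup>2) integrable_on {0..2*pi}"
proof -
  obtain N k where "negligible N" and deriv: "\<And>x. x \<notin> N \<Longrightarrow> (R has_real_derivative k x) (at x)"
    and "k \<in> borel_measurable borel" and k_bound: "\<And>x. \<bar>k x\<bar> \<le> L"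
    by (rule lipschitz_integral_of_derivative[OF R_lipschitz]) blast
  obtain m where "0 < m" and m: "\<And>\<theta>. \<theta> \<in> {0..2*pi} \<Longrightarrow> m \<le> R \<theta>"
    by (rule R_lower_bound) blast
  have "(\<lambda>\<theta>. (k \<theta> / R \<theta>)\<^sup>2) \<in> borel_measurable borel"
    using \<open>k \<in> borel_measurable borel\<close> R_borel_measurable by measurable
  then have "(\<lambda>\<theta>. (k \<theta> / R \<theta>)\<^sup>2) \<in> borel_measurable (lebesgue_on {0..2*pi})"
    by (intro measurable_restrict_space1 measurable_completion) (simp add: measurable_lborel1)
  moreover have "\<bar>(k \<theta> / R \<theta>)\<^sup>2\<bar> \<le> (L / m)\<^sup>2" if "\<theta> \<in> {0..2*pi}" for \<theta>
  proof -
    have "\<bar>k \<theta>\<bar> / R \<theta> \<le> L / m"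
      using lipschitz_on_nonneg[OF R_lipschitz] k_bound \<open>0 < m\<close> m[OF that] by (rule frac_le)
    then have "\<bar>k \<theta> / R \<theta>\<bar>\<^sup>2 \<le> (L / m)\<^sup>2"
      using R_pos[of \<theta>] by (intro power_mono) (simp_all add: abs_divide)
    then show ?thesis by (simp add: power_abs)
  qed
  ultimately have "(\<lambda>\<theta>. (k \<theta> / R \<theta>)\<^sup>2) integrable_on {0..2*pi}"
    by (rule integrable_on_interval_if_bounded_measurable)
  then show ?thesis
    by (rule integrable_spike[OF _ \<open>negligible N\<close>]) (simp add: deriv_ln_R[OF deriv])
qed

lemma g0_stretch_map:
  "g0 (stretch_map R) = 1 + integral {0..2*pi} (\<lambda>\<theta>. (deriv (\<lambda>t. ln (R t)) \<theta>)\<^sup>2) / (2*pi)"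
proof -
  obtain N k where "negligible N" and deriv: "\<And>x. x \<notin> N \<Longrightarrow> (R has_real_derivative k x) (at x)"
    by (rule lipschitz_integral_of_derivative[OF R_lipschitz]) blast
  have "integral {0..2*pi} (a0 (stretch_map R))
      = integral {0..2*pi} (\<lambda>\<theta>. 1 + (deriv (\<lambda>t. ln (R t)) \<theta>)\<^sup>2)"
    using \<open>negligible N\<close>
    by (intro integral_spike[of "N \<union> {pi}"]) (auto simp: stretch_map_at_differentiable_point[OF deriv])
  also have "\<dots> = 2 * pi + integral {0..2*pi} (\<lambda>\<theta>. (deriv (\<lambda>t. ln (R t)) \<theta>)\<^sup>2)"
    by (subst integral_add[OF integrable_const_ivl deriv_ln_R_square_integrable]) simp
  finally show ?thesis
    unfolding g0_def by (simp add: add_divide_distrib)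
qed

lemma g0_stretch_map_ge_1: "g0 (stretch_map R) \<ge> 1"
  unfolding g0_stretch_map using deriv_ln_R_square_integrable
  by (simp add: integral_nonneg)

lemma g0_stretch_map_eq_1_iff: "g0 (stretch_map R) = 1 \<longleftrightarrow> (\<exists>c. \<forall>\<theta>. R \<theta> = c)"
proof
  assume "\<exists>c. \<forall>\<theta>. R \<theta> = c"
  then obtain c where "R = (\<lambda>_. c)" by auto
  then show "g0 (stretch_map R) = 1"
    unfolding g0_stretch_map by simp
next
  assume "g0 (stretch_map R) = 1"
  then have "integral {0..2*pi} (\<lambda>\<theta>. (deriv (\<lambda>t. ln (R t)) \<theta>)\<^sup>2) = 0"
    unfolding g0_stretch_map by simp
  then obtain N' where "negligible N'"
    and zero: "\<And>\<theta>. \<theta> \<in> {0..2*pi} - N' \<Longrightarrow> (deriv (\<lambda>t. ln (R t)) \<theta>)\<^sup>2 = 0"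
    using nonneg_integral_eq_0_imp_ae_0[OF deriv_ln_R_square_integrable] by auto
  obtain N k where "negligible N" and deriv: "\<And>x. x \<notin> N \<Longrightarrow> (R has_real_derivative k x) (at x)"
    and k_int: "\<And>a b. a \<le> b \<Longrightarrow> (k has_integral (R b - R a)) {a..b}"
    by (rule lipschitz_integral_of_derivative[OF R_lipschitz]) blast
  have k_zero: "k \<theta> = 0" if "\<theta> \<in> {0..2*pi} - (N \<union> N')" for \<theta>
    using zero[of \<theta>] that R_pos[of \<theta>] deriv_ln_R[OF deriv, of \<theta>] by simp
  have on_period: "R \<theta> = R 0" if "\<theta> \<in> {0..2*pi}" for \<theta>
  proof -
    have "(k has_integral 0) {0..\<theta>}"
      by (rule has_integral_spike[OF negligible_Un[OF \<open>negligible N\<close> \<open>negligible N'\<close>] _ has_integral_0])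
        (use that k_zero in auto)
    then show ?thesis
      using k_int[of 0 \<theta>] that by (auto dest: has_integral_unique)
  qed
  have "R \<theta> = R 0" for \<theta>
    by (rule periodic_eq_on_period_imp_eq[where f = R and p = "2 * pi", OF _ R_periodic on_period]) simp
  then show "\<exists>c. \<forall>\<theta>. R \<theta> = c" by blast
qed

lemma g1_stretch_map:
  "g1 q (stretch_map R) =
     (integral {0..2*pi} (\<lambda>\<theta>. ((R \<theta>)\<^sup>2 + (deriv R \<theta>)\<^sup>2) * (q (complex_of_real (R \<theta>) * cis \<theta>))\<^sup>2) / (2*pi))
   / (integral {0..2*pi} (\<lambda>\<theta>. sqrt ((R \<theta>)\<^sup>2 + (deriv R \<theta>)\<^sup>2) * q (complex_of_real (R \<theta>) * cis \<theta>)) / (2*pi))\<^sup>2"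
proof -
  obtain N k where "negligible N" and deriv: "\<And>x. x \<notin> N \<Longrightarrow> (R has_real_derivative k x) (at x)"
    by (rule lipschitz_integral_of_derivative[OF R_lipschitz]) blast
  have "negligible (N \<union> {pi})" using \<open>negligible N\<close> by simp
  note at_\<theta> = stretch_map_at_differentiable_point[OF deriv]
  have "integral {0..2*pi} (\<lambda>\<theta>. a1 (stretch_map R) \<theta> * (pw q (stretch_map R) \<theta>)\<^sup>2)
      = integral {0..2*pi} (\<lambda>\<theta>. ((R \<theta>)\<^sup>2 + (deriv R \<theta>)\<^sup>2) * (q (complex_of_real (R \<theta>) * cis \<theta>))\<^sup>2)"
    by (rule integral_spike[OF \<open>negligible (N \<union> {pi})\<close>]) (simp add: at_\<theta> power_mult_distrib)
  moreover have "integral {0..2*pi} (pw q (stretch_map R))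
      = integral {0..2*pi} (\<lambda>\<theta>. sqrt ((R \<theta>)\<^sup>2 + (deriv R \<theta>)\<^sup>2) * q (complex_of_real (R \<theta>) * cis \<theta>))"
    by (rule integral_spike[OF \<open>negligible (N \<union> {pi})\<close>]) (simp add: at_\<theta>)
  ultimately show ?thesis
    unfolding g1_def by simp
qed

lemma speed_times_weight_power_integrable:
  assumes "k \<in> borel_measurable borel" "\<And>x. \<bar>k x\<bar> \<le> L"
    and "w \<in> borel_measurable lebesgue" "\<And>x. \<bar>w x\<bar> \<le> C"
  shows "(\<lambda>\<theta>. (sqrt ((R \<theta>)\<^sup>2 + (k \<theta>)\<^sup>2) * w \<theta>) ^ n) integrable_on {0..2*pi}"
proof -
  obtain M where M: "\<And>\<theta>. \<theta> \<in> {0..2*pi} \<Longrightarrow> R \<theta> \<le> M"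
    by (rule R_upper_bound) blast
  have "R \<in> borel_measurable (lebesgue_on {0..2*pi})" "k \<in> borel_measurable (lebesgue_on {0..2*pi})"
    using R_borel_measurable assms(1)
    by (auto intro!: measurable_restrict_space1 measurable_completion simp: measurable_lborel1)
  moreover have "w \<in> borel_measurable (lebesgue_on {0..2*pi})"
    using assms(3) by (rule measurable_restrict_space1)
  ultimately have "(\<lambda>\<theta>. (sqrt ((R \<theta>)\<^sup>2 + (k \<theta>)\<^sup>2) * w \<theta>) ^ n) \<in> borel_measurable (lebesgue_on {0..2*pi})"
    by measurable
  moreover have "\<bar>(sqrt ((R \<theta>)\<^sup>2 + (k \<theta>)\<^sup>2) * w \<theta>) ^ n\<bar> \<le> (sqrt (M\<^sup>2 + L\<^sup>2) * C) ^ n"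
    if "\<theta> \<in> {0..2*pi}" for \<theta>
  proof -
    have "(R \<theta>)\<^sup>2 \<le> M\<^sup>2" using M[OF that] R_pos[of \<theta>] by (intro power_mono) auto
    moreover have "(k \<theta>)\<^sup>2 \<le> L\<^sup>2" using power_mono[OF assms(2)[of \<theta>] abs_ge_zero, of 2] by simp
    ultimately have "sqrt ((R \<theta>)\<^sup>2 + (k \<theta>)\<^sup>2) \<le> sqrt (M\<^sup>2 + L\<^sup>2)" by simp
    then have "\<bar>sqrt ((R \<theta>)\<^sup>2 + (k \<theta>)\<^sup>2) * w \<theta>\<bar> \<le> sqrt (M\<^sup>2 + L\<^sup>2) * C"
      using assms(4)[of \<theta>] by (auto simp: abs_mult intro!: mult_mono)
    then show ?thesis
      using power_mono[OF _ abs_ge_zero, of _ _ n] by (simp add: power_abs)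
  qed
  ultimately show ?thesis
    by (rule integrable_on_interval_if_bounded_measurable)
qed

lemma g1_stretch_map_ge_1:
  assumes q_meas: "(\<lambda>\<theta>. q (complex_of_real (R \<theta>) * cis \<theta>)) \<in> borel_measurable lebesgue"
    and q_bounded: "AE \<theta> in lebesgue. q (complex_of_real (R \<theta>) * cis \<theta>) \<le> B"
    and q_pos: "AE \<theta> in lebesgue. q (complex_of_real (R \<theta>) * cis \<theta>) > 0"
  shows "g1 q (stretch_map R) \<ge> 1"
proof -
  obtain N k where "negligible N" and deriv: "\<And>x. x \<notin> N \<Longrightarrow> (R has_real_derivative k x) (at x)"
    and "k \<in> borel_measurable borel" and "\<And>x. \<bar>k x\<bar> \<le> L"
    by (rule lipschitz_integral_of_derivative[OF R_lipschitz]) blast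
  \<comment> \<open>The weight is only almost everywhere positive and bounded; clip it to make it so everywhere.\<close>
  obtain Q N' where "Q \<in> borel_measurable lebesgue" and Q_bound: "\<And>\<theta>. 0 \<le> Q \<theta> \<and> Q \<theta> \<le> max 0 B"
    and "negligible N'" and Q_eq: "\<And>\<theta>. \<theta> \<notin> N' \<Longrightarrow> Q \<theta> = q (complex_of_real (R \<theta>) * cis \<theta>) \<and> 0 < Q \<theta>"
    by (rule ae_positive_bounded_clip[OF q_meas q_bounded q_pos]) auto
  define P where "P \<theta> = sqrt ((R \<theta>)\<^sup>2 + (k \<theta>)\<^sup>2) * Q \<theta>" for \<theta>
  have "\<bar>Q \<theta>\<bar> \<le> max 0 B" for \<theta> using Q_bound[of \<theta>] by simp
  note P_pow_int = speed_times_weight_power_integrable[OF \<open>k \<in> _\<close> \<open>\<And>x. \<bar>k x\<bar> \<le> L\<close> \<open>Q \<in> _\<close> this,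
      folded P_def]
  have ratio: "(integral {0..2*pi} (\<lambda>\<theta>. (P \<theta>)\<^sup>2) / (2*pi - 0)) / (integral {0..2*pi} P / (2*pi - 0))\<^sup>2 \<ge> 1"
  proof (rule mean_square_div_square_mean_ge_1[OF _ P_pow_int[of 2] _ \<open>negligible N'\<close>])
    show "P integrable_on {0..2*pi}" using P_pow_int[of 1] by simp
    show "0 < P \<theta>" if "\<theta> \<in> {0..2*pi} - N'" for \<theta>
      using that Q_eq[of \<theta>] R_pos[of \<theta>] by (auto simp: P_def intro!: mult_pos_pos add_pos_nonneg)
  qed (use Q_bound in \<open>simp_all add: P_def\<close>)
  have "negligible (N \<union> N')" using \<open>negligible N\<close> \<open>negligible N'\<close> by simp
  have P_eq: "P \<theta> = sqrt ((R \<theta>)\<^sup>2 + (deriv R \<theta>)\<^sup>2) * q (complex_of_real (R \<theta>) * cis \<theta>)"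
    if "\<theta> \<notin> N \<union> N'" for \<theta>
    using that Q_eq[of \<theta>] DERIV_imp_deriv[OF deriv, of \<theta>] by (simp add: P_def)
  have "integral {0..2*pi} (\<lambda>\<theta>. ((R \<theta>)\<^sup>2 + (deriv R \<theta>)\<^sup>2) * (q (complex_of_real (R \<theta>) * cis \<theta>))\<^sup>2)
      = integral {0..2*pi} (\<lambda>\<theta>. (P \<theta>)\<^sup>2)"
    by (rule integral_spike[OF \<open>negligible (N \<union> N')\<close>]) (simp add: P_eq power_mult_distrib)
  moreover have "integral {0..2*pi} (\<lambda>\<theta>. sqrt ((R \<theta>)\<^sup>2 + (deriv R \<theta>)\<^sup>2) * q (complex_of_real (R \<theta>) * cis \<theta>))
      = integral {0..2*pi} P"
    by (rule integral_spike[OF \<open>negligible (N \<union> N')\<close>]) (simp add: P_eq)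
  ultimately show ?thesis
    using ratio unfolding g1_stretch_map by simp
qed

end

theorem lemma1p5:
  fixes R :: "real \<Rightarrow> real" and q :: "complex \<Rightarrow> real"
  assumes R_pos: "\<forall>\<theta>. R \<theta> > 0"
    and R_periodic: "\<forall>\<theta>. R (\<theta> + 2*pi) = R \<theta>"
    and R_lipschitz: "\<exists>L. L-lipschitz_on UNIV R"
    and q_meas: "(\<lambda>\<theta>. q (complex_of_real (R \<theta>) * cis \<theta>)) \<in> borel_measurable lebesgue"
    and q_bounded: "\<exists>B. AE \<theta> in lebesgue. q (complex_of_real (R \<theta>) * cis \<theta>) \<le> B"
    and q_pos: "AE \<theta> in lebesgue. q (complex_of_real (R \<theta>) * cis \<theta>) > 0"
  shows "g0 (stretch_map R) = 1 + integral {0..2*pi} (\<lambda>\<theta>. (deriv (\<lambda>t. ln (R t)) \<theta>)\<^sup>2) / (2*pi) \<and>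
         g1 q (stretch_map R) =
           (integral {0..2*pi} (\<lambda>\<theta>. ((R \<theta>)\<^sup>2 + (deriv R \<theta>)\<^sup>2) * (q (complex_of_real (R \<theta>) * cis \<theta>))\<^sup>2) / (2*pi))
         / (integral {0..2*pi} (\<lambda>\<theta>. sqrt ((R \<theta>)\<^sup>2 + (deriv R \<theta>)\<^sup>2) * q (complex_of_real (R \<theta>) * cis \<theta>)) / (2*pi))\<^sup>2 \<and>
         g0 (stretch_map R) \<ge> 1 \<and>
         g1 q (stretch_map R) \<ge> 1 \<and>
         (g0 (stretch_map R) = 1 \<longleftrightarrow> (\<exists>c. \<forall>\<theta>. R \<theta> = c))"
proof -
  obtain L where "L-lipschitz_on UNIV R" using R_lipschitz by blast
  then interpret starlike_radius R L
    using R_pos R_periodic by unfold_locales auto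
  obtain B where "AE \<theta> in lebesgue. q (complex_of_real (R \<theta>) * cis \<theta>) \<le> B"
    using q_bounded by blast
  with q_meas q_pos have "g1 q (stretch_map R) \<ge> 1"
    by (intro g1_stretch_map_ge_1)
  then show ?thesis
    using g0_stretch_map g1_stretch_map g0_stretch_map_ge_1 g0_stretch_map_eq_1_iff by blast
qed

end
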